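(* Let $x \in \{\text{complete}, \text{stable}, \text{grounded}, \text{preferred}, \text{ideal}, \text{semi-stable}, \text{eager}\}$ and let $\sigma$ be either the semantics $\sigma_x$ itself (credulous mode) or its skeptical mode $\sigma_x^{\cap}$. Then there exist argumentation frameworks $AF=(AR,Attacks)$ and $AF'=(AR',Attacks')$ with $AF \preceq_N AF'$ such that the following statement does NOT hold: $$\forall E \in \sigma(AF)\ \exists E' \in \sigma(AF') \text{ such that } (E' \not\subseteq AR \ \lor\ E' = E).$$
   Context: An argumentation framework is a pair $AF=(AR,Attacks)$ where $AR$ is a finite set (of arguments) and $Attacks \subseteq AR \times AR$; $a$ attacks $b$ iff $(a,b)\in Attacks$, and a set $S$ attacks $b$ iff some element of $S$ attacks $b$. An argumentation semantics $\sigma$ assigns to each argumentation framework $AF$ a set $\sigma(AF)$ of subsets of $AR$ (the $\sigma$-extensions). $AF'=(AR',Attacks')$ is a normal expansion of $AF=(AR,Attacks)$, written $AF\preceq_N AF'$, iff $AR\subseteq AR'$, $Attacks\subseteq Attacks'$, and there is no $(a,b)\in Attacks'\setminus Attacks$ with both $a\in AR$ and $b\in AR$. A set $S\subseteq AR$ is conflict-free iff no element of $S$ attacks an element of $S$. An argument $a$ is acceptable w.r.t. $S$ iff every attacker of $a$ is attacked by $S$. A conflict-free $S$ is admissible iff every element of $S$ is acceptable w.r.t. $S$. The range of $S$ is $S\cup S^+$ where $S^+=\{b\in AR: \text{some } a\in S \text{ attacks } b\}$. For an admissible set $S$: $S$ is a stable extension iff $S$ attacks every argument not in $S$; a preferred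 extension iff $S$ is $\subseteq$-maximal among admissible sets; a complete extension iff every argument acceptable w.r.t. $S$ belongs to $S$; the grounded extension iff $S$ is the $\subseteq$-minimal complete extension; the ideal extension iff $S$ is the $\subseteq$-maximal admissible set contained in every preferred extension; a semi-stable extension iff $S$ is a complete extension whose range is $\subseteq$-maximal among ranges of complete extensions; the eager extension iff $S$ is the $\subseteq$-maximal admissible set contained in every semi-stable extension. $\sigma_x(AF)$ is the set of all $x$-extensions of $AF$. The skeptical mode is $\sigma^{\cap}(AF)=\{\bigcap_{E\in\sigma(AF)}E\}$, with the convention that $\sigma^{\cap}(AF)=\emptyset$ when $\sigma(AF)=\emptyset$. *)

theory Defs
  imports Main
begin

type_synonym 'a af = "'a set \<times> ('a \<times> 'a) set"

definition is_AF :: "'a af \<Rightarrow> bool" where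
  "is_AF AF \<longleftrightarrow> finite (fst AF) \<and> snd AF \<subseteq> fst AF \<times> fst AF"

definition normal_expansion :: "'a af \<Rightarrow> 'a af \<Rightarrow> bool" where
  "normal_expansion AF AF' \<longleftrightarrow>
     fst AF \<subseteq> fst AF' \<and> snd AF \<subseteq> snd AF' \<and>
     (\<forall>(a, b) \<in> snd AF' - snd AF. \<not> (a \<in> fst AF \<and> b \<in> fst AF))"

definition set_attacks :: "'a af \<Rightarrow> 'a set \<Rightarrow> 'a \<Rightarrow> bool" where
  "set_attacks AF S b \<longleftrightarrow> (\<exists>a\<in>S. (a, b) \<in> snd AF)"

definition conflict_free :: "'a af \<Rightarrow> 'a set \<Rightarrow> bool" where
  "conflict_free AF S \<longleftrightarrow> (\<forall>a\<in>S. \<forall>b\<in>S. (a, b) \<notin> snd AF)"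

definition acceptable :: "'a af \<Rightarrow> 'a set \<Rightarrow> 'a \<Rightarrow> bool" where
  "acceptable AF S a \<longleftrightarrow> (\<forall>b\<in>fst AF. (b, a) \<in> snd AF \<longrightarrow> set_attacks AF S b)"

definition admissible :: "'a af \<Rightarrow> 'a set \<Rightarrow> bool" where
  "admissible AF S \<longleftrightarrow> S \<subseteq> fst AF \<and> conflict_free AF S \<and> (\<forall>a\<in>S. acceptable AF S a)"

definition range_of :: "'a af \<Rightarrow> 'a set \<Rightarrow> 'a set" where
  "range_of AF S = S \<union> {b \<in> fst AF. set_attacks AF S b}"

definition stable_ext :: "'a af \<Rightarrow> 'a set \<Rightarrow> bool" where
  "stable_ext AF S \<longleftrightarrow> admissible AF S \<and> (\<forall>b\<in>fst AF - S. set_attacks AF S b)"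

definition preferred_ext :: "'a af \<Rightarrow> 'a set \<Rightarrow> bool" where
  "preferred_ext AF S \<longleftrightarrow> admissible AF S \<and> (\<forall>T. admissible AF T \<and> S \<subseteq> T \<longrightarrow> T = S)"

definition complete_ext :: "'a af \<Rightarrow> 'a set \<Rightarrow> bool" where
  "complete_ext AF S \<longleftrightarrow> admissible AF S \<and> (\<forall>a\<in>fst AF. acceptable AF S a \<longrightarrow> a \<in> S)"

definition grounded_ext :: "'a af \<Rightarrow> 'a set \<Rightarrow> bool" where
  "grounded_ext AF S \<longleftrightarrow> complete_ext AF S \<and> (\<forall>T. complete_ext AF T \<and> T \<subseteq> S \<longrightarrow> T = S)"

definition ideal_ext :: "'a af \<Rightarrow> 'a set \<Rightarrow> bool" where
  "ideal_ext AF S \<longleftrightarrow> admissible AF S \<and> (\<forall>P. preferred_ext AF P \<longrightarrow> S \<subseteq> P) \<and>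
     (\<forall>T. admissible AF T \<and> (\<forall>P. preferred_ext AF P \<longrightarrow> T \<subseteq> P) \<and> S \<subseteq> T \<longrightarrow> T = S)"

definition semi_stable_ext :: "'a af \<Rightarrow> 'a set \<Rightarrow> bool" where
  "semi_stable_ext AF S \<longleftrightarrow> complete_ext AF S \<and>
     (\<forall>T. complete_ext AF T \<and> range_of AF S \<subseteq> range_of AF T \<longrightarrow> range_of AF T = range_of AF S)"

definition eager_ext :: "'a af \<Rightarrow> 'a set \<Rightarrow> bool" where
  "eager_ext AF S \<longleftrightarrow> admissible AF S \<and> (\<forall>P. semi_stable_ext AF P \<longrightarrow> S \<subseteq> P) \<and>
     (\<forall>T. admissible AF T \<and> (\<forall>P. semi_stable_ext AF P \<longrightarrow> T \<subseteq> P) \<and> S \<subseteq> T \<longrightarrow> T = S)"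

datatype semantics = Complete | Stable | Grounded | Preferred | Ideal | SemiStable | Eager

datatype mode = Credulous | Skeptical

fun sigma :: "semantics \<Rightarrow> 'a af \<Rightarrow> 'a set set" where
  "sigma Complete AF = {S. complete_ext AF S}"
| "sigma Stable AF = {S. stable_ext AF S}"
| "sigma Grounded AF = {S. grounded_ext AF S}"
| "sigma Preferred AF = {S. preferred_ext AF S}"
| "sigma Ideal AF = {S. ideal_ext AF S}"
| "sigma SemiStable AF = {S. semi_stable_ext AF S}"
| "sigma Eager AF = {S. eager_ext AF S}"

definition skeptical :: "'a set set \<Rightarrow> 'a set set" where
  "skeptical Es = (if Es = {} then {} else {\<Inter> Es})"

fun sigma_mode :: "mode \<Rightarrow> semantics \<Rightarrow> 'a af \<Rightarrow> 'a set set" where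
  "sigma_mode Credulous x AF = sigma x AF"
| "sigma_mode Skeptical x AF = skeptical (sigma x AF)"

end

theory Submission
  imports Defs
begin

text \<open>A single unattacked argument is accepted under every semantics. Expanding the framework
  by a new argument that attacks itself and every old argument, and is attacked by nothing else,
  leaves the empty set as the only admissible set: defending anything against the new argument
  would require the new argument itself. So every extension of the expansion is empty, hence
  contained in the old arguments and different from the old extension.\<close>

lemma extension_admissible:
  assumes "S \<in> sigma x AF"
  shows "admissible AF S"
  using assms
  by (cases x)
    (auto simp: stable_ext_def preferred_ext_def complete_ext_def grounded_ext_def
      ideal_ext_def semi_stable_ext_def eager_ext_def)

lemma skeptical_singleton: "skeptical {E} = {E}"
  by (simp add: skeptical_def)

lemma skeptical_subset_singleton:
  assumes "Es \<subseteq> {E}"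
  shows "skeptical Es \<subseteq> {E}"
  using assms by (auto simp: skeptical_def)

lemma sigma_mode_eq_singleton:
  assumes "sigma x AF = {E}"
  shows "sigma_mode m x AF = {E}"
  using assms by (cases m) (simp_all add: skeptical_singleton)

lemma sigma_mode_subset_singleton:
  assumes "sigma x AF \<subseteq> {E}"
  shows "sigma_mode m x AF \<subseteq> {E}"
  using assms by (cases m) (simp_all add: skeptical_subset_singleton)

lemma admissible_attack_free: "admissible (A, {}) S \<longleftrightarrow> S \<subseteq> A"
  by (auto simp: admissible_def conflict_free_def acceptable_def)

lemma complete_ext_attack_free: "complete_ext (A, {}) S \<longleftrightarrow> S = A"
  by (auto simp: complete_ext_def admissible_attack_free acceptable_def)

lemma stable_ext_attack_free: "stable_ext (A, {}) S \<longleftrightarrow> S = A"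
  by (auto simp: stable_ext_def admissible_attack_free set_attacks_def)

lemma grounded_ext_attack_free: "grounded_ext (A, {}) S \<longleftrightarrow> S = A"
  unfolding grounded_ext_def complete_ext_attack_free by blast

lemma preferred_ext_attack_free: "preferred_ext (A, {}) S \<longleftrightarrow> S = A"
  unfolding preferred_ext_def admissible_attack_free by blast

lemma ideal_ext_attack_free: "ideal_ext (A, {}) S \<longleftrightarrow> S = A"
  unfolding ideal_ext_def preferred_ext_attack_free admissible_attack_free by blast

lemma semi_stable_ext_attack_free: "semi_stable_ext (A, {}) S \<longleftrightarrow> S = A"
  unfolding semi_stable_ext_def complete_ext_attack_free by blast

lemma eager_ext_attack_free: "eager_ext (A, {}) S \<longleftrightarrow> S = A"
  unfolding eager_ext_def semi_stable_ext_attack_free admissible_attack_free by blast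

lemma sigma_attack_free: "sigma x (A, {}) = {A}"
  by (cases x)
    (auto simp: complete_ext_attack_free stable_ext_attack_free grounded_ext_attack_free
      preferred_ext_attack_free ideal_ext_attack_free semi_stable_ext_attack_free
      eager_ext_attack_free)

lemma admissible_with_universal_self_attacker:
  assumes b: "b \<in> fst AF"
    and attacks_all: "\<forall>a \<in> fst AF. (b, a) \<in> snd AF"
    and attacked_only_by_itself: "\<forall>c. (c, b) \<in> snd AF \<longrightarrow> c = b"
    and "admissible AF S"
  shows "S = {}"
proof (rule ccontr)
  assume "S \<noteq> {}"
  then obtain a where "a \<in> S" by blast
  with \<open>admissible AF S\<close> have "a \<in> fst AF" "acceptable AF S a"
    by (auto simp: admissible_def)
  with b attacks_all have "set_attacks AF S b"
    by (auto simp: acceptable_def)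
  with attacked_only_by_itself have "b \<in> S"
    by (auto simp: set_attacks_def)
  with attacks_all b \<open>admissible AF S\<close> show False
    by (auto simp: admissible_def conflict_free_def)
qed

lemma sigma_subset_empty_if_admissible_empty:
  assumes "\<And>S. admissible AF S \<Longrightarrow> S = {}"
  shows "sigma x AF \<subseteq> {{}}"
  using assms extension_admissible by blast

theorem proposition37:
  fixes x :: semantics and m :: mode
  shows "\<exists>AF AF' :: nat af. is_AF AF \<and> is_AF AF' \<and> normal_expansion AF AF' \<and>
    \<not> (\<forall>E \<in> sigma_mode m x AF. \<exists>E' \<in> sigma_mode m x AF'. \<not> E' \<subseteq> fst AF \<or> E' = E)"
proof -
  define AF :: "nat af" where "AF = ({0}, {})"
  define AF' :: "nat af" where "AF' = ({0, 1}, {(1, 0), (1, 1)})"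
  have "is_AF AF" "is_AF AF'" "normal_expansion AF AF'"
    by (auto simp: is_AF_def normal_expansion_def AF_def AF'_def)
  moreover have "sigma_mode m x AF = {{0}}"
    unfolding AF_def by (rule sigma_mode_eq_singleton) (rule sigma_attack_free)
  moreover have "sigma_mode m x AF' \<subseteq> {{}}"
  proof (intro sigma_mode_subset_singleton sigma_subset_empty_if_admissible_empty)
    show "S = {}" if "admissible AF' S" for S
      using admissible_with_universal_self_attacker[of 1 AF' S] that by (auto simp: AF'_def)
  qed
  ultimately show ?thesis
    by (intro exI[of _ AF] exI[of _ AF']) (auto simp: AF_def)
qed

end
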